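(* Let $m\ge2$, $n\ge1$, $f_i:\mathbb{R}^n\to\mathbb{R}$ smooth, each with $L^g_{f_i}$-Lipschitz gradient and $L^H_{f_i}$-Lipschitz Hessian; let $\sigma>0$. Fix $\boldsymbol\theta^0$, let $\Psi_{\boldsymbol\theta^0}(\mathbf{x})=F(\boldsymbol\theta^0+\sqrt{\hat{\mathbf{L}}}\mathbf{x})$ and $\mathbf{x}^0\in\mathbb{R}^{mn}$. Given $\rho\ge1$, let $\alpha=\frac{1}{L^g_\Psi\rho^7}$, $d=\frac{\sigma}{20L^H_\Psi\rho^2}$, $r=\lceil\rho/\sqrt\alpha\rceil$ and $\ell_s=\frac{d^2}{4\alpha r}-2mn\alpha\sigma^2(r+\sqrt{r\rho}+\rho)$. If $\{\mathbf{y}^k\},\{\mathbf{z}^k\}$ are coupling sequences, then for any $t_0\ge0$, $$\mathbb{P}\big[\mathcal{E}_A^{t_0,r}\cup\mathcal{E}_B^{t_0,r}\big]\ge1-8re^{-\rho},$$ where $\mathcal{E}_A^{t_0,r}=\{\exists\tau\in(0,r]:\ \min\{\Psi_{\boldsymbol\theta^0}(\mathbf{y}^{t_0+\tau})-\Psi_{\boldsymbol\theta^0}(\mathbf{y}^{t_0}),\ \Psi_{\boldsymbol\theta^0}(\mathbf{z}^{t_0+\tau})-\Psi_{\boldsymbol\theta^0}(\mathbf{z}^{t_0})\}\le-\ell_s\}$ and $\mathcal{E}_B^{t_0,r}=\{\forall\tau\in(0,r]:\ \max\{\|\mathbf{y}^{t_0+\tau}-\mathbf{y}^{t_0}\|,\|\mathbf{z}^{t_0+\tau}-\mathbf{z}^{t_0}\|\}\le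 d\}$.
   Context: $F(\boldsymbol\theta)=\sum_{i=1}^mf_i(\boldsymbol\theta_i)$. $\mathbf{L}$ is the Laplacian of an undirected graph on $\{1,\dots,m\}$, $\sqrt{\mathbf{L}}$ its unique symmetric positive semidefinite square root, $\sqrt{\hat{\mathbf{L}}}=\sqrt{\mathbf{L}}\otimes\mathbf{I}_n$. $L^g_\Psi=\|\sqrt{\mathbf{L}}\|^2\max_iL^g_{f_i}$, $L^H_\Psi=\|\sqrt{\mathbf{L}}\|^3\max_iL^H_{f_i}$. Let $\mathbf{e}_\alpha$ be a unit eigenvector of $\nabla^2\Psi_{\boldsymbol\theta^0}(\mathbf{x}^0)$ for its minimum eigenvalue. Coupling sequences: $\mathbf{y}^0=\mathbf{z}^0=\mathbf{x}^0$, $\mathbf{y}^{k+1}=\mathbf{y}^k-\alpha(\nabla\Psi_{\boldsymbol\theta^0}(\mathbf{y}^k)+\mathbf{n}^k_{\mathbf{y}})$, $\mathbf{z}^{k+1}=\mathbf{z}^k-\alpha(\nabla\Psi_{\boldsymbol\theta^0}(\mathbf{z}^k)+\mathbf{n}^k_{\mathbf{z}})$, where each of $\{\mathbf{n}^k_{\mathbf{y}}\}$, $\{\mathbf{n}^k_{\mathbf{z}}\}$ is independent over $k$ with law $\mathcal{N}(\mathbf{0},\sigma^2\mathbf{I}_{mn})$, and for all $k$: $\mathbf{n}^k_{\mathbf{y}}-\mathbf{n}^k_{\mathbf{z}}\in\mathrm{span}(\mathbf{e}_\alpha)$ and $\mathbf{e}_\alpha^\top\mathbf{n}^k_{\mathbf{y}}=-\mathbf{e}_\alpha^\top\mathbf{n}^k_{\mathbf{z}}$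 (the two sequences share a common source of randomness). *)

theory Defs
  imports "HOL-Analysis.Analysis" "HOL-Probability.Probability"
begin

fun ddir :: "('a::real_normed_vector) list \<Rightarrow> ('a \<Rightarrow> real) \<Rightarrow> 'a \<Rightarrow> real" where
  "ddir [] f = f"
| "ddir (v # vs) f = (\<lambda>x. frechet_derivative (ddir vs f) (at x) v)"

definition smooth_fun :: "('a::real_normed_vector \<Rightarrow> real) \<Rightarrow> bool" where
  "smooth_fun f \<longleftrightarrow> (\<forall>vs x. ddir vs f differentiable (at x))"

definition graph_laplacian :: "('m::finite \<Rightarrow> 'm \<Rightarrow> bool) \<Rightarrow> real^'m^'m" where
  "graph_laplacian E = (\<chi> i j. if i = j then real (card {k. E i k}) else if E i j then -1 else 0)"

(* (S \<otimes> I_n) x  for x \<in> R^{mn} viewed as m blocks of length n *)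
definition kron_id :: "real^'m^'m \<Rightarrow> real^'n^'m \<Rightarrow> real^'n^'m" where
  "kron_id S x = (\<chi> i. \<Sum>j\<in>UNIV. (S $ i $ j) *\<^sub>R (x $ j))"

definition gauss :: "real \<Rightarrow> (real^'n^'m) measure" where
  "gauss \<sigma> = density lborel (\<lambda>x. ennreal (\<Prod>i\<in>UNIV. \<Prod>j\<in>UNIV. normal_density 0 \<sigma> (x $ i $ j)))"

end

theory Submission
  imports Defs
begin

(*
  Since the gradient of Psi is Lipschitz with constant Lg_Psi and alpha Lg_Psi <= 1, a noisy
  gradient step lowers Psi by at least alpha/2 (|grad Psi|^2 - |n|^2).  If Psi never drops by ls
  within r steps, the squared gradients summed over the window are thus below 2 ls / alpha plus
  the noise energy, and Cauchy-Schwarz bounds the squared displacement by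
  4 alpha r ls + 4 alpha^2 r B whenever the noise energy is at most B = 2 mn sigma^2 (r + rho);
  the choice of ls makes this at most d^2.  A Chernoff bound with
  E exp(|n|^2 / (4 sigma^2)) = 2^(mn/2) shows that the energy exceeds B with probability at most
  e^(-rho), and the reflection coupling gives both sequences the same noise energy.  This even
  yields the bound 1 - e^(-rho).
*)

section \<open>Noisy gradient descent\<close>

lemma power2_norm_sum_le:
  fixes v :: "nat \<Rightarrow> 'v::real_normed_vector"
  shows "(norm (\<Sum>k<n. v k))\<^sup>2 \<le> real n * (\<Sum>k<n. (norm (v k))\<^sup>2)"
proof -
  have "norm (\<Sum>k<n. v k) \<le> (\<Sum>k<n. 1 * norm (v k))"
    using norm_sum by simp
  then have "(norm (\<Sum>k<n. v k))\<^sup>2 \<le> (\<Sum>k<n. 1 * norm (v k))\<^sup>2"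
    by (simp add: power_mono)
  also have "\<dots> \<le> (\<Sum>k<n. 1\<^sup>2) * (\<Sum>k<n. (norm (v k))\<^sup>2)"
    by (rule Cauchy_Schwarz_ineq_sum)
  finally show ?thesis by simp
qed

lemma power2_norm_add_le:
  fixes a b :: "'v::real_normed_vector"
  shows "(norm (a + b))\<^sup>2 \<le> 2 * (norm a)\<^sup>2 + 2 * (norm b)\<^sup>2"
proof -
  have "(norm (a + b))\<^sup>2 \<le> (norm a + norm b)\<^sup>2"
    by (intro power_mono norm_triangle_ineq) auto
  also have "\<dots> \<le> 2 * (norm a)\<^sup>2 + 2 * (norm b)\<^sup>2"
    using zero_le_power2[of "norm a - norm b"] unfolding power2_diff power2_sum by linarith
  finally show ?thesis .
qed

lemma lipschitz_gradient_upper_bound: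
  fixes \<Psi> :: "'v::real_inner \<Rightarrow> real"
  assumes grad: "\<And>x. (\<Psi> has_derivative (\<lambda>h. g x \<bullet> h)) (at x)"
    and lip: "\<And>x y. norm (g x - g y) \<le> L * norm (x - y)"
  shows "\<Psi> b \<le> \<Psi> a + g a \<bullet> (b - a) + L/2 * (norm (b - a))\<^sup>2"
proof -
  define v where "v = b - a"
  define \<phi> where "\<phi> t = \<Psi> (a + t *\<^sub>R v) - t * (g a \<bullet> v) - L/2 * t\<^sup>2 * (norm v)\<^sup>2" for t
  have "\<phi> 1 \<le> \<phi> 0"
  proof (rule DERIV_nonpos_imp_nonincreasing[of 0 1])
    fix t :: real assume t: "0 \<le> t" "t \<le> 1"
    have "((\<lambda>t. a + t *\<^sub>R v) has_derivative (\<lambda>h. h *\<^sub>R v)) (at t)"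
      by (auto intro!: derivative_eq_intros)
    from has_derivative_compose[OF this grad]
    have "((\<lambda>t. \<Psi> (a + t *\<^sub>R v)) has_real_derivative (g (a + t *\<^sub>R v) \<bullet> v)) (at t)"
      by (simp add: has_field_derivative_def mult_commute_abs)
    then have "(\<phi> has_real_derivative (g (a + t *\<^sub>R v) \<bullet> v - g a \<bullet> v - L * t * (norm v)\<^sup>2)) (at t)"
      unfolding \<phi>_def by (auto intro!: derivative_eq_intros)
    moreover have "(g (a + t *\<^sub>R v) - g a) \<bullet> v \<le> L * t * (norm v)\<^sup>2"
    proof -
      have "(g (a + t *\<^sub>R v) - g a) \<bullet> v \<le> norm (g (a + t *\<^sub>R v) - g a) * norm v"
        by (rule norm_cauchy_schwarz)
      also have "\<dots> \<le> L * norm (t *\<^sub>R v) * norm v"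
        using lip[of "a + t *\<^sub>R v" a] by (intro mult_right_mono) auto
      finally show ?thesis
        using t by (simp add: power2_eq_square mult.assoc)
    qed
    ultimately show "\<exists>y. (\<phi> has_real_derivative y) (at t) \<and> y \<le> 0"
      by (auto simp: inner_diff_left)
  qed auto
  then show ?thesis by (simp add: \<phi>_def v_def)
qed

lemma noisy_gradient_step_decrease:
  fixes \<Psi> :: "'v::real_inner \<Rightarrow> real"
  assumes upper: "\<And>a b. \<Psi> b \<le> \<Psi> a + g a \<bullet> (b - a) + L/2 * (norm (b - a))\<^sup>2"
    and \<alpha>: "0 \<le> \<alpha>" "L * \<alpha> \<le> 1"
  shows "\<Psi> (x - \<alpha> *\<^sub>R (g x + w)) \<le> \<Psi> x + \<alpha>/2 * ((norm w)\<^sup>2 - (norm (g x))\<^sup>2)"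
proof -
  have "\<Psi> (x - \<alpha> *\<^sub>R (g x + w))
      \<le> \<Psi> x - \<alpha> * (g x \<bullet> (g x + w)) + (L * \<alpha>) * \<alpha> / 2 * (norm (g x + w))\<^sup>2"
    using upper[where a = x and b = "x - \<alpha> *\<^sub>R (g x + w)"] \<alpha>(1)
    by (simp add: power_mult_distrib power2_eq_square mult_ac)
  moreover have "(L * \<alpha>) * \<alpha> / 2 * (norm (g x + w))\<^sup>2 \<le> \<alpha> / 2 * (norm (g x + w))\<^sup>2"
    using mult_right_mono[OF \<alpha>(2) \<alpha>(1)] by (intro mult_right_mono divide_right_mono) auto
  moreover have "- \<alpha> * (g x \<bullet> (g x + w)) + \<alpha> / 2 * (norm (g x + w))\<^sup>2
      = \<alpha>/2 * ((norm w)\<^sup>2 - (norm (g x))\<^sup>2)"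
    by (simp add: power2_norm_eq_inner inner_add_left inner_add_right inner_commute algebra_simps)
  ultimately show ?thesis by linarith
qed

lemma noisy_gradient_descent_telescope:
  fixes \<Psi> :: "'v::real_inner \<Rightarrow> real" and u w :: "nat \<Rightarrow> 'v"
  assumes upper: "\<And>a b. \<Psi> b \<le> \<Psi> a + g a \<bullet> (b - a) + L/2 * (norm (b - a))\<^sup>2"
    and \<alpha>: "0 \<le> \<alpha>" "L * \<alpha> \<le> 1"
    and step: "\<And>k. u (Suc k) = u k - \<alpha> *\<^sub>R (g (u k) + w k)"
  shows "\<Psi> (u n) - \<Psi> (u 0)
    \<le> \<alpha>/2 * ((\<Sum>k<n. (norm (w k))\<^sup>2) - (\<Sum>k<n. (norm (g (u k)))\<^sup>2))"
proof (induction n)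
  case (Suc n)
  have "\<Psi> (u (Suc n)) \<le> \<Psi> (u n) + \<alpha>/2 * ((norm (w n))\<^sup>2 - (norm (g (u n)))\<^sup>2)"
    unfolding step by (rule noisy_gradient_step_decrease[OF upper \<alpha>])
  with Suc.IH show ?case by (simp add: algebra_simps)
qed simp

lemma noisy_gradient_descent_displacement:
  fixes \<Psi> :: "'v::real_inner \<Rightarrow> real" and u w :: "nat \<Rightarrow> 'v"
  assumes upper: "\<And>a b. \<Psi> b \<le> \<Psi> a + g a \<bullet> (b - a) + L/2 * (norm (b - a))\<^sup>2"
    and \<alpha>: "0 < \<alpha>" "L * \<alpha> \<le> 1"
    and step: "\<And>k. u (Suc k) = u k - \<alpha> *\<^sub>R (g (u k) + w k)"
    and no_descent: "- ls < \<Psi> (u \<tau>) - \<Psi> (u 0)"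
    and energy: "(\<Sum>k<r. (norm (w k))\<^sup>2) \<le> B"
    and "\<tau> \<le> r"
  shows "(norm (u \<tau> - u 0))\<^sup>2 \<le> 4 * \<alpha> * r * ls + 4 * \<alpha>\<^sup>2 * r * B"
proof -
  define G where "G = (\<Sum>k<\<tau>. (norm (g (u k)))\<^sup>2)"
  define W where "W = (\<Sum>k<\<tau>. (norm (w k))\<^sup>2)"
  have "0 \<le> G" "0 \<le> W" unfolding G_def W_def by (simp_all add: sum_nonneg)
  have "W \<le> (\<Sum>k<r. (norm (w k))\<^sup>2)"
    unfolding W_def using \<open>\<tau> \<le> r\<close> by (intro sum_mono2) auto
  with energy have "W \<le> B" by linarith
  \<comment> \<open>without descent by ls, telescoping bounds the accumulated squared gradient\<close>
  have gradients: "\<alpha> * G < 2 * ls + \<alpha> * W"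
    using no_descent noisy_gradient_descent_telescope[of \<Psi> g L \<alpha> u w \<tau>,
        OF upper less_imp_le[OF \<alpha>(1)] \<alpha>(2) step]
    unfolding G_def W_def by (simp add: algebra_simps)
  have "0 \<le> ls + \<alpha> * W"
    using gradients mult_nonneg_nonneg[OF less_imp_le[OF \<alpha>(1)] \<open>0 \<le> G\<close>]
      mult_nonneg_nonneg[OF less_imp_le[OF \<alpha>(1)] \<open>0 \<le> W\<close>] by linarith
  have "u \<tau> - u 0 = - (\<alpha> *\<^sub>R (\<Sum>k<\<tau>. g (u k) + w k))"
    by (induction \<tau>) (simp_all add: step algebra_simps)
  then have "(norm (u \<tau> - u 0))\<^sup>2 = \<alpha>\<^sup>2 * (norm (\<Sum>k<\<tau>. g (u k) + w k))\<^sup>2"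
    using \<alpha> by (simp add: power_mult_distrib)
  also have "\<dots> \<le> \<alpha>\<^sup>2 * (\<tau> * (\<Sum>k<\<tau>. (norm (g (u k) + w k))\<^sup>2))"
    by (intro mult_left_mono power2_norm_sum_le) auto
  also have "\<dots> \<le> \<alpha>\<^sup>2 * (\<tau> * (\<Sum>k<\<tau>. 2 * (norm (g (u k)))\<^sup>2 + 2 * (norm (w k))\<^sup>2))"
    by (intro mult_left_mono sum_mono power2_norm_add_le) auto
  also have "\<dots> = \<alpha>\<^sup>2 * (\<tau> * (2 * G + 2 * W))"
    by (simp add: G_def W_def sum.distrib sum_distrib_left)
  also have "\<dots> \<le> 2 * \<alpha> * \<tau> * (2 * ls + \<alpha> * W) + 2 * \<alpha>\<^sup>2 * \<tau> * W"
    using mult_strict_left_mono[OF gradients, of "2 * \<alpha> * \<tau>"] \<alpha>(1)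
    by (cases "\<tau> = 0") (auto simp: power2_eq_square algebra_simps)
  also have "\<dots> = 4 * \<alpha> * \<tau> * (ls + \<alpha> * W)"
    by (simp add: power2_eq_square algebra_simps)
  also have "\<dots> \<le> 4 * \<alpha> * r * (ls + \<alpha> * W)"
    using \<open>\<tau> \<le> r\<close> \<open>0 \<le> ls + \<alpha> * W\<close> \<alpha>(1) by (intro mult_right_mono) auto
  also have "\<dots> \<le> 4 * \<alpha> * r * (ls + \<alpha> * B)"
    using \<open>W \<le> B\<close> \<alpha>(1) by (intro mult_left_mono add_left_mono) auto
  also have "\<dots> = 4 * \<alpha> * r * ls + 4 * \<alpha>\<^sup>2 * r * B"
    by (simp add: power2_eq_square algebra_simps)
  finally show ?thesis .
qed

lemma noisy_gradient_descent_descends_or_stays: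
  fixes \<Psi> :: "'v::real_inner \<Rightarrow> real" and u w :: "nat \<Rightarrow> 'v"
  assumes grad: "\<And>x. (\<Psi> has_derivative (\<lambda>h. g x \<bullet> h)) (at x)"
    and lip: "\<And>x y. norm (g x - g y) \<le> L * norm (x - y)"
    and \<alpha>: "0 < \<alpha>" "L * \<alpha> \<le> 1"
    and step: "\<And>k. u (Suc k) = u k - \<alpha> *\<^sub>R (g (u k) + w k)"
    and energy: "(\<Sum>k<r. (norm (w k))\<^sup>2) \<le> B"
    and budget: "4 * \<alpha> * r * ls + 4 * \<alpha>\<^sup>2 * r * B \<le> d\<^sup>2" and "0 \<le> d"
  shows "(\<exists>\<tau>\<in>{1..r}. \<Psi> (u \<tau>) - \<Psi> (u 0) \<le> - ls) \<or> (\<forall>\<tau>\<in>{1..r}. norm (u \<tau> - u 0) \<le> d)"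
proof (cases "\<exists>\<tau>\<in>{1..r}. \<Psi> (u \<tau>) - \<Psi> (u 0) \<le> - ls")
  case False
  have "norm (u \<tau> - u 0) \<le> d" if "\<tau> \<in> {1..r}" for \<tau>
  proof -
    from False that have "- ls < \<Psi> (u \<tau>) - \<Psi> (u 0)" by force
    from noisy_gradient_descent_displacement[OF lipschitz_gradient_upper_bound[OF grad lip] \<alpha>
        step this energy] that budget
    have "(norm (u \<tau> - u 0))\<^sup>2 \<le> d\<^sup>2" by simp
    then show ?thesis using \<open>0 \<le> d\<close> by (rule power2_le_imp_le)
  qed
  then show ?thesis by blast
qed simp

lemma noisy_gradient_descent_pair_descends_or_stays:
  fixes \<Psi> :: "'v::real_inner \<Rightarrow> real" and y z wy wz :: "nat \<Rightarrow> 'v"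
  assumes grad: "\<And>x. (\<Psi> has_derivative (\<lambda>h. g x \<bullet> h)) (at x)"
    and lip: "\<And>x y. norm (g x - g y) \<le> L * norm (x - y)"
    and \<alpha>: "0 < \<alpha>" "L * \<alpha> \<le> 1"
    and y_step: "\<And>k. y (Suc k) = y k - \<alpha> *\<^sub>R (g (y k) + wy k)"
    and z_step: "\<And>k. z (Suc k) = z k - \<alpha> *\<^sub>R (g (z k) + wz k)"
    and energy: "(\<Sum>k\<in>{t0..<t0 + r}. (norm (wy k))\<^sup>2) \<le> B"
    and same_energy: "\<And>k. norm (wz k) = norm (wy k)"
    and budget: "4 * \<alpha> * r * ls + 4 * \<alpha>\<^sup>2 * r * B \<le> d\<^sup>2" and "0 \<le> d"
  shows "(\<exists>\<tau>\<in>{1..r}. min (\<Psi> (y (t0 + \<tau>)) - \<Psi> (y t0)) (\<Psi> (z (t0 + \<tau>)) - \<Psi> (z t0)) \<le> - ls)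
       \<or> (\<forall>\<tau>\<in>{1..r}. max (norm (y (t0 + \<tau>) - y t0)) (norm (z (t0 + \<tau>) - z t0)) \<le> d)"
proof -
  have energy_y: "(\<Sum>k<r. (norm (wy (t0 + k)))\<^sup>2) \<le> B"
    using energy sum.shift_bounds_nat_ivl[of "\<lambda>k. (norm (wy k))\<^sup>2" 0 t0 r]
    by (simp add: atLeast0LessThan add.commute)
  then have energy_z: "(\<Sum>k<r. (norm (wz (t0 + k)))\<^sup>2) \<le> B"
    by (simp add: same_energy)
  have "(\<exists>\<tau>\<in>{1..r}. \<Psi> (y (t0 + \<tau>)) - \<Psi> (y (t0 + 0)) \<le> - ls)
      \<or> (\<forall>\<tau>\<in>{1..r}. norm (y (t0 + \<tau>) - y (t0 + 0)) \<le> d)"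
    using y_step[of "t0 + k" for k]
    by (intro noisy_gradient_descent_descends_or_stays[where u = "\<lambda>k. y (t0 + k)", OF grad lip \<alpha>
        _ energy_y budget \<open>0 \<le> d\<close>]) simp
  moreover have "(\<exists>\<tau>\<in>{1..r}. \<Psi> (z (t0 + \<tau>)) - \<Psi> (z (t0 + 0)) \<le> - ls)
      \<or> (\<forall>\<tau>\<in>{1..r}. norm (z (t0 + \<tau>) - z (t0 + 0)) \<le> d)"
    using z_step[of "t0 + k" for k]
    by (intro noisy_gradient_descent_descends_or_stays[where u = "\<lambda>k. z (t0 + k)", OF grad lip \<alpha>
        _ energy_z budget \<open>0 \<le> d\<close>]) simp
  ultimately show ?thesis
    by (auto simp: min_le_iff_disj)
qed

section \<open>The consensus objective\<close>

lemma power2_norm_vec: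
  "(norm (x :: 'a::real_normed_vector^'k))\<^sup>2 = (\<Sum>i\<in>UNIV. (norm (x $ i))\<^sup>2)"
  by (simp add: norm_vec_def L2_set_def sum_nonneg)

lemma linear_kron_id: "linear (kron_id S)"
  by (rule linearI)
    (simp_all add: kron_id_def vec_eq_iff sum.distrib scaleR_add_right scaleR_sum_right mult_ac)

lemma kron_id_nth_nth: "kron_id S x $ i $ l = (S *v (\<chi> j. x $ j $ l)) $ i"
  by (simp add: kron_id_def matrix_vector_mult_def)

lemma norm_kron_id_le:
  fixes S :: "real^'m^'m" and x :: "real^'n^'m"
  shows "norm (kron_id S x) \<le> onorm ((*v) S) * norm x"
proof -
  let ?s = "onorm ((*v) S)"
  have "(norm (kron_id S x))\<^sup>2 = (\<Sum>l\<in>UNIV. (norm (S *v (\<chi> j. x $ j $ l)))\<^sup>2)"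
    by (simp add: power2_norm_vec kron_id_nth_nth) (subst sum.swap, simp add: power2_norm_vec)
  also have "\<dots> \<le> (\<Sum>l\<in>UNIV. (?s * norm (\<chi> j. x $ j $ l))\<^sup>2)"
    by (intro sum_mono power_mono onorm[OF matrix_vector_mul_bounded_linear]) auto
  also have "\<dots> = (?s * norm x)\<^sup>2"
    by (simp add: power_mult_distrib power2_norm_vec sum_distrib_left[symmetric])
      (subst sum.swap, simp)
  finally show ?thesis
    using onorm_pos_le[OF matrix_vector_mul_bounded_linear[of S]]
    by (simp add: power2_le_iff_abs_le)
qed

lemma inner_kron_id_commute:
  fixes S :: "real^'m^'m" and u h :: "real^'n^'m"
  assumes "transpose S = S"
  shows "kron_id S u \<bullet> h = u \<bullet> kron_id S h"
proof -
  have S_sym: "S $ i $ j = S $ j $ i" for i j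
    using assms unfolding transpose_def by (metis vec_lambda_beta)
  have "kron_id S u \<bullet> h = (\<Sum>i\<in>UNIV. \<Sum>j\<in>UNIV. S $ i $ j * (u $ j \<bullet> h $ i))"
    by (simp add: kron_id_def inner_vec_def[of _ h] inner_sum_left)
  also have "\<dots> = (\<Sum>j\<in>UNIV. \<Sum>i\<in>UNIV. S $ j $ i * (u $ j \<bullet> h $ i))"
    by (subst sum.swap) (simp add: S_sym)
  also have "\<dots> = u \<bullet> kron_id S h"
    by (simp add: kron_id_def inner_vec_def[of u] inner_sum_right)
  finally show ?thesis .
qed

lemma has_derivative_sum_kron_id:
  fixes S :: "real^'m^'m" and f :: "'m \<Rightarrow> real^'n \<Rightarrow> real" and gf :: "'m \<Rightarrow> real^'n \<Rightarrow> real^'n"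
    and \<theta>0 :: "real^'n^'m"
  assumes "transpose S = S"
    and f_grad: "\<And>i x. (f i has_derivative (\<lambda>h. gf i x \<bullet> h)) (at x)"
  shows "((\<lambda>x. \<Sum>i\<in>UNIV. f i ((\<theta>0 + kron_id S x) $ i)) has_derivative
          (\<lambda>h. kron_id S (\<chi> i. gf i ((\<theta>0 + kron_id S x) $ i)) \<bullet> h)) (at x)"
proof -
  have "bounded_linear (kron_id S)"
    using linear_kron_id by (simp add: linear_conv_bounded_linear)
  then have "bounded_linear (\<lambda>h. kron_id S h $ i)" for i
    by (rule bounded_linear_compose[OF bounded_linear_vec_nth])
  then have "((\<lambda>x. (\<theta>0 + kron_id S x) $ i) has_derivative (\<lambda>h. kron_id S h $ i)) (at x)" for i
    by (auto intro!: derivative_eq_intros bounded_linear_imp_has_derivative)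
  then have "((\<lambda>x. \<Sum>i\<in>UNIV. f i ((\<theta>0 + kron_id S x) $ i)) has_derivative
          (\<lambda>h. \<Sum>i\<in>UNIV. gf i ((\<theta>0 + kron_id S x) $ i) \<bullet> kron_id S h $ i)) (at x)"
    by (intro has_derivative_sum has_derivative_compose[OF _ f_grad])
  moreover have "(\<Sum>i\<in>UNIV. gf i ((\<theta>0 + kron_id S x) $ i) \<bullet> kron_id S h $ i)
      = kron_id S (\<chi> i. gf i ((\<theta>0 + kron_id S x) $ i)) \<bullet> h" for h
    unfolding inner_kron_id_commute[OF assms(1)]
    by (simp only: inner_vec_def[of "\<chi> i. gf i ((\<theta>0 + kron_id S x) $ i)"] vec_lambda_beta)
  ultimately show ?thesis by simp
qed

lemma lipschitz_kron_id_gradient: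
  fixes S :: "real^'m^'m" and gf :: "'m \<Rightarrow> real^'n \<Rightarrow> real^'n" and \<theta>0 :: "real^'n^'m"
  assumes grad_lip: "\<And>i x x'. norm (gf i x - gf i x') \<le> Lg i * dist x x'"
    and Lg_nonneg: "\<And>i. 0 \<le> Lg i"
  defines "G \<equiv> \<lambda>x. kron_id S (\<chi> i. gf i ((\<theta>0 + kron_id S x) $ i))"
  shows "norm (G x - G y) \<le> (onorm ((*v) S))\<^sup>2 * Max (range Lg) * norm (x - y)"
proof -
  let ?s = "onorm ((*v) S)" and ?L = "Max (range Lg)"
  define a where "a = \<theta>0 + kron_id S x"
  define b where "b = \<theta>0 + kron_id S y"
  have "0 \<le> ?s" by (rule onorm_pos_le[OF matrix_vector_mul_bounded_linear])
  have Lg_le: "Lg i \<le> ?L" for i by (rule Max_ge) auto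
  have "0 \<le> ?L" using Lg_nonneg Lg_le order_trans by blast
  have "(norm ((\<chi> i. gf i (a $ i)) - (\<chi> i. gf i (b $ i))))\<^sup>2
      = (\<Sum>i\<in>UNIV. (norm (gf i (a $ i) - gf i (b $ i)))\<^sup>2)"
    by (simp add: power2_norm_vec)
  also have "\<dots> \<le> (\<Sum>i\<in>UNIV. (?L * norm ((a - b) $ i))\<^sup>2)"
  proof (intro sum_mono power_mono)
    fix i
    show "norm (gf i (a $ i) - gf i (b $ i)) \<le> ?L * norm ((a - b) $ i)"
      using grad_lip[of i "a $ i" "b $ i"] mult_right_mono[OF Lg_le[of i] norm_ge_zero[of "(a - b) $ i"]]
      by (simp add: dist_norm)
  qed simp
  also have "\<dots> = (?L * norm (a - b))\<^sup>2"
    by (simp add: power_mult_distrib power2_norm_vec[of "a - b"] sum_distrib_left)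
  finally have gf_diff: "norm ((\<chi> i. gf i (a $ i)) - (\<chi> i. gf i (b $ i))) \<le> ?L * norm (a - b)"
    using \<open>0 \<le> ?L\<close> by (simp add: power2_le_iff_abs_le)
  have "G x - G y = kron_id S ((\<chi> i. gf i (a $ i)) - (\<chi> i. gf i (b $ i)))"
    unfolding G_def a_def b_def by (simp add: linear_diff[OF linear_kron_id])
  then have "norm (G x - G y) \<le> ?s * norm ((\<chi> i. gf i (a $ i)) - (\<chi> i. gf i (b $ i)))"
    by (simp add: norm_kron_id_le)
  also have "\<dots> \<le> ?s * (?L * norm (a - b))"
    using gf_diff \<open>0 \<le> ?s\<close> by (rule mult_left_mono)
  also have "a - b = kron_id S (x - y)"
    unfolding a_def b_def by (simp add: linear_diff[OF linear_kron_id])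
  also have "?s * (?L * norm (kron_id S (x - y))) \<le> ?s * (?L * (?s * norm (x - y)))"
    using \<open>0 \<le> ?s\<close> \<open>0 \<le> ?L\<close> by (intro mult_left_mono norm_kron_id_le) auto
  finally show ?thesis by (simp add: power2_eq_square mult_ac)
qed

lemma lipschitz_gradient_sum_kron_id:
  fixes S :: "real^'m^'m" and f :: "'m \<Rightarrow> real^'n \<Rightarrow> real" and gf :: "'m \<Rightarrow> real^'n \<Rightarrow> real^'n"
    and \<theta>0 :: "real^'n^'m" and \<Psi> :: "real^'n^'m \<Rightarrow> real" and g\<Psi> :: "real^'n^'m \<Rightarrow> real^'n^'m"
  assumes S_sym: "transpose S = S"
    and f_grad: "\<And>i x. (f i has_derivative (\<lambda>h. gf i x \<bullet> h)) (at x)"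
    and grad_lip: "\<And>i x x'. norm (gf i x - gf i x') \<le> Lg i * dist x x'"
    and Lg_nonneg: "\<And>i. 0 \<le> Lg i"
    and \<Psi>_def: "\<Psi> = (\<lambda>x. \<Sum>i\<in>UNIV. f i ((\<theta>0 + kron_id S x) $ i))"
    and \<Psi>_grad: "\<And>x. (\<Psi> has_derivative (\<lambda>h. g\<Psi> x \<bullet> h)) (at x)"
  shows "norm (g\<Psi> x - g\<Psi> y) \<le> (onorm ((*v) S))\<^sup>2 * Max (range Lg) * norm (x - y)"
proof -
  have "g\<Psi> x = kron_id S (\<chi> i. gf i ((\<theta>0 + kron_id S x) $ i))" for x
    using has_derivative_unique[OF \<Psi>_grad has_derivative_sum_kron_id[of S f gf \<theta>0, OF S_sym f_grad, folded \<Psi>_def]]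
    by (simp add: fun_eq_iff vector_eq_rdot)
  then show ?thesis
    using lipschitz_kron_id_gradient[OF grad_lip Lg_nonneg] by simp
qed

section \<open>Gaussian noise energy\<close>

lemma prod_Basis_vec:
  "(\<Prod>b\<in>(Basis :: ('a::euclidean_space^'k) set). h b) = (\<Prod>i\<in>UNIV. \<Prod>u\<in>Basis. h (axis i u))"
proof -
  have Basis: "(Basis :: ('a^'k) set) = (\<lambda>(i, u). axis i u) ` (UNIV \<times> Basis)"
    unfolding Basis_vec_def by auto
  have inj: "inj_on (\<lambda>(i, u). axis i u :: 'a^'k) (UNIV \<times> Basis)"
    by (auto simp: inj_on_def axis_eq_axis nonzero_Basis)
  show ?thesis
    unfolding Basis prod.reindex[OF inj] by (simp add: prod.cartesian_product split_def)
qed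

lemma nn_integral_normal_density_exp_square:
  assumes "0 < \<sigma>"
  shows "(\<integral>\<^sup>+y. ennreal (normal_density 0 \<sigma> y * exp (y\<^sup>2 / (4 * \<sigma>\<^sup>2))) \<partial>lborel) = ennreal (sqrt 2)"
proof -
  \<comment> \<open>the weight turns the density of variance \<open>\<sigma>\<^sup>2\<close> into \<open>sqrt 2\<close> times that of variance \<open>2 \<sigma>\<^sup>2\<close>\<close>
  have density: "normal_density 0 \<sigma> y * exp (y\<^sup>2 / (4 * \<sigma>\<^sup>2))
      = sqrt 2 * normal_density 0 (sqrt 2 * \<sigma>) y" for y
  proof -
    have "exp (- y\<^sup>2 / (2 * \<sigma>\<^sup>2)) * exp (y\<^sup>2 / (4 * \<sigma>\<^sup>2)) = exp (- y\<^sup>2 / (2 * (sqrt 2 * \<sigma>)\<^sup>2))"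
      unfolding exp_add[symmetric] using assms by (simp add: power_mult_distrib field_simps)
    moreover have "1 / sqrt (2 * pi * \<sigma>\<^sup>2) = sqrt 2 * (1 / sqrt (2 * pi * (sqrt 2 * \<sigma>)\<^sup>2))"
      using assms by (simp add: power_mult_distrib real_sqrt_mult field_simps)
    ultimately show ?thesis
      unfolding normal_density_def by (simp add: mult_ac)
  qed
  have "(\<integral>\<^sup>+y. ennreal (normal_density 0 (sqrt 2 * \<sigma>) y) \<partial>lborel) = 1"
    using assms
    by (subst nn_integral_eq_integral) (auto intro!: integrable_normal_density simp: integral_normal_density)
  then show ?thesis
    by (simp add: density ennreal_mult nn_integral_cmult)
qed

lemma nn_integral_gauss_exp_norm_square:
  assumes "0 < \<sigma>"
  shows "(\<integral>\<^sup>+x. ennreal (exp ((norm x)\<^sup>2 / (4 * \<sigma>\<^sup>2))) \<partial>(gauss \<sigma> :: (real^'n^'m) measure))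
     = ennreal (sqrt 2 ^ (CARD('m) * CARD('n)))"
proof -
  let ?h = "\<lambda>y. normal_density 0 \<sigma> y * exp (y\<^sup>2 / (4 * \<sigma>\<^sup>2))"
  have density_measurable:
    "(\<lambda>x::real^'n^'m. \<Prod>i\<in>UNIV. \<Prod>j\<in>UNIV. normal_density 0 \<sigma> (x $ i $ j)) \<in> borel_measurable borel"
    by (intro borel_measurable_continuous_onI)
      (use assms in \<open>auto intro!: continuous_intros simp: normal_density_def\<close>)
  have "(\<integral>\<^sup>+x. ennreal (exp ((norm x)\<^sup>2 / (4 * \<sigma>\<^sup>2))) \<partial>(gauss \<sigma> :: (real^'n^'m) measure))
      = (\<integral>\<^sup>+x. ennreal (\<Prod>i\<in>UNIV. \<Prod>j\<in>UNIV. normal_density 0 \<sigma> (x $ i $ j))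
                 * ennreal (exp ((norm x)\<^sup>2 / (4 * \<sigma>\<^sup>2))) \<partial>(lborel :: (real^'n^'m) measure))"
    unfolding gauss_def by (rule nn_integral_density) (use density_measurable in auto)
  also have "\<dots> = (\<integral>\<^sup>+x. (\<Prod>b\<in>Basis. ennreal (?h (x \<bullet> b))) \<partial>(lborel :: (real^'n^'m) measure))"
  proof (intro nn_integral_cong)
    fix x :: "real^'n^'m"
    have "(norm x)\<^sup>2 / (4 * \<sigma>\<^sup>2) = (\<Sum>i\<in>UNIV. \<Sum>j\<in>UNIV. (x $ i $ j)\<^sup>2 / (4 * \<sigma>\<^sup>2))"
      by (simp add: power2_norm_vec sum_divide_distrib)
    then show "ennreal (\<Prod>i\<in>UNIV. \<Prod>j\<in>UNIV. normal_density 0 \<sigma> (x $ i $ j))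
                 * ennreal (exp ((norm x)\<^sup>2 / (4 * \<sigma>\<^sup>2))) = (\<Prod>b\<in>Basis. ennreal (?h (x \<bullet> b)))"
      by (simp add: exp_sum prod.distrib prod_Basis_vec inner_axis prod_ennreal
          ennreal_mult'' prod_nonneg)
  qed
  also have "\<dots> = (\<Prod>b\<in>(Basis :: (real^'n^'m) set). \<integral>\<^sup>+y. ennreal (?h y) \<partial>lborel)"
    by (rule nn_integral_lborel_prod) auto
  also have "\<dots> = ennreal (sqrt 2 ^ (CARD('m) * CARD('n)))"
    by (simp add: nn_integral_normal_density_exp_square[OF assms] ennreal_power)
  finally show ?thesis .
qed

lemma sqrt2_le_exp_half: "sqrt 2 \<le> exp (1/2 :: real)"
proof (rule power2_le_imp_le)
  have "(exp (1/2 :: real))\<^sup>2 = exp 1" by (simp add: power2_eq_square exp_add[symmetric])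
  with exp_ge_add_one_self[of 1] show "(sqrt 2)\<^sup>2 \<le> (exp (1/2 :: real))\<^sup>2" by simp
qed simp

context prob_space
begin

lemma nn_integral_exp_gauss_energy:
  fixes ny :: "nat \<Rightarrow> 'a \<Rightarrow> real^'n^'m"
  assumes indep: "indep_vars (\<lambda>_. borel) ny UNIV"
    and law: "\<And>k. distr M borel (ny k) = gauss \<sigma>"
    and "0 < \<sigma>" and "finite I"
  shows "(\<integral>\<^sup>+\<omega>. ennreal (exp ((\<Sum>k\<in>I. (norm (ny k \<omega>))\<^sup>2) / (4 * \<sigma>\<^sup>2))) \<partial>M)
    = ennreal (sqrt 2 ^ (CARD('m) * CARD('n) * card I))"
proof -
  have [measurable]: "ny k \<in> borel_measurable M" for k
    using indep unfolding indep_vars_def by auto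
  have "(\<integral>\<^sup>+\<omega>. ennreal (exp ((\<Sum>k\<in>I. (norm (ny k \<omega>))\<^sup>2) / (4 * \<sigma>\<^sup>2))) \<partial>M)
      = (\<integral>\<^sup>+\<omega>. (\<Prod>k\<in>I. ennreal (exp ((norm (ny k \<omega>))\<^sup>2 / (4 * \<sigma>\<^sup>2)))) \<partial>M)"
    by (simp add: sum_divide_distrib exp_sum prod_ennreal \<open>finite I\<close>)
  also have "\<dots> = (\<Prod>k\<in>I. \<integral>\<^sup>+\<omega>. ennreal (exp ((norm (ny k \<omega>))\<^sup>2 / (4 * \<sigma>\<^sup>2))) \<partial>M)"
  proof (rule indep_vars_nn_integral[OF \<open>finite I\<close>])
    have "indep_vars (\<lambda>_. borel) ny I"
      using indep_vars_subset[OF indep subset_UNIV] .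
    then show "indep_vars (\<lambda>_. borel) (\<lambda>k \<omega>. ennreal (exp ((norm (ny k \<omega>))\<^sup>2 / (4 * \<sigma>\<^sup>2)))) I"
      by (rule indep_vars_compose2[where X = ny]) auto
  qed auto
  also have "\<dots> = (\<Prod>k\<in>I. ennreal (sqrt 2 ^ (CARD('m) * CARD('n))))"
  proof (rule prod.cong[OF refl])
    fix k
    have "(\<integral>\<^sup>+\<omega>. ennreal (exp ((norm (ny k \<omega>))\<^sup>2 / (4 * \<sigma>\<^sup>2))) \<partial>M)
        = (\<integral>\<^sup>+x. ennreal (exp ((norm x)\<^sup>2 / (4 * \<sigma>\<^sup>2))) \<partial>distr M borel (ny k))"
      by (rule nn_integral_distr[symmetric]) auto
    then show "(\<integral>\<^sup>+\<omega>. ennreal (exp ((norm (ny k \<omega>))\<^sup>2 / (4 * \<sigma>\<^sup>2))) \<partial>M)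
        = ennreal (sqrt 2 ^ (CARD('m) * CARD('n)))"
      by (simp add: law nn_integral_gauss_exp_norm_square[OF \<open>0 < \<sigma>\<close>])
  qed
  also have "\<dots> = ennreal (sqrt 2 ^ (CARD('m) * CARD('n) * card I))"
    by (simp add: power_mult ennreal_power)
  finally show ?thesis .
qed

lemma gauss_energy_tail:
  fixes ny :: "nat \<Rightarrow> 'a \<Rightarrow> real^'n^'m" and \<rho> :: real
  assumes indep: "indep_vars (\<lambda>_. borel) ny UNIV"
    and law: "\<And>k. distr M borel (ny k) = gauss \<sigma>"
    and "0 < \<sigma>" and "finite I"
    and N2: "2 \<le> CARD('m) * CARD('n)" and "0 \<le> \<rho>"
  shows "prob {\<omega>\<in>space M. 2 * real (CARD('m) * CARD('n)) * \<sigma>\<^sup>2 * (card I + \<rho>)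
                            \<le> (\<Sum>k\<in>I. (norm (ny k \<omega>))\<^sup>2)} \<le> exp (- \<rho>)"
proof -
  define N where "N = CARD('m) * CARD('n)"
  define s where "s = 1 / (4 * \<sigma>\<^sup>2)"
  define B where "B = 2 * real N * \<sigma>\<^sup>2 * (card I + \<rho>)"
  define W where "W \<omega> = (\<Sum>k\<in>I. (norm (ny k \<omega>))\<^sup>2)" for \<omega>
  have [measurable]: "ny k \<in> borel_measurable M" for k
    using indep unfolding indep_vars_def by auto
  have "W \<in> borel_measurable M"
    unfolding W_def by measurable
  then have "(\<lambda>\<omega>. W \<omega> * indicator (space M) \<omega>) \<in> borel_measurable M"
    by (intro borel_measurable_times borel_measurable_indicator) auto
  have "0 < s" using \<open>0 < \<sigma>\<close> by (simp add: s_def)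
  have "emeasure M {\<omega>\<in>space M. B \<le> W \<omega>}
      \<le> ennreal (exp (- s * B)) * (\<integral>\<^sup>+\<omega>. ennreal (exp (s * W \<omega>)) * indicator (space M) \<omega> \<partial>M)"
    by (rule Chernoff_ineq_nn_integral_ge[OF \<open>0 < s\<close> sets.top]) fact
  also have "(\<integral>\<^sup>+\<omega>. ennreal (exp (s * W \<omega>)) * indicator (space M) \<omega> \<partial>M) = ennreal (sqrt 2 ^ (N * card I))"
  proof -
    have "(\<integral>\<^sup>+\<omega>. ennreal (exp (s * W \<omega>)) * indicator (space M) \<omega> \<partial>M)
        = (\<integral>\<^sup>+\<omega>. ennreal (exp ((\<Sum>k\<in>I. (norm (ny k \<omega>))\<^sup>2) / (4 * \<sigma>\<^sup>2))) \<partial>M)"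
      by (intro nn_integral_cong) (simp add: W_def s_def)
    then show ?thesis
      unfolding N_def by (simp add: nn_integral_exp_gauss_energy[OF indep law \<open>0 < \<sigma>\<close> \<open>finite I\<close>])
  qed
  also have "ennreal (exp (- s * B)) * ennreal (sqrt 2 ^ (N * card I)) \<le> ennreal (exp (- \<rho>))"
  proof -
    have "exp (- s * B) * sqrt 2 ^ (N * card I) \<le> exp (- s * B) * exp (1/2) ^ (N * card I)"
      by (intro mult_left_mono power_mono sqrt2_le_exp_half) auto
    also have "\<dots> = exp (- s * B) * exp (real (N * card I) / 2)"
      by (simp add: exp_of_nat_mult[symmetric])
    also have "\<dots> = exp (- s * B + real (N * card I) / 2)"
      by (rule mult_exp_exp)
    also have "- s * B + real (N * card I) / 2 = - (real N * \<rho> / 2)"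
      using \<open>0 < \<sigma>\<close> by (simp add: s_def B_def field_simps)
    also have "exp (- (real N * \<rho> / 2)) \<le> exp (- \<rho>)"
    proof -
      have "(2::real) \<le> real N"
        using of_nat_mono[where 'a = real, OF N2] unfolding N_def by simp
      then have "2 * \<rho> \<le> real N * \<rho>" using \<open>0 \<le> \<rho>\<close> by (rule mult_right_mono)
      then show ?thesis by simp
    qed
    finally have "exp (- s * B) * sqrt 2 ^ (N * card I) \<le> exp (- \<rho>)" .
    then have "ennreal (exp (- s * B) * sqrt 2 ^ (N * card I)) \<le> ennreal (exp (- \<rho>))"
      by (rule ennreal_leI)
    then show ?thesis
      by (subst ennreal_mult[symmetric]) auto
  qed
  finally have "prob {\<omega>\<in>space M. B \<le> W \<omega>} \<le> exp (- \<rho>)"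
    by (simp add: emeasure_eq_measure)
  then show ?thesis
    unfolding B_def W_def N_def .
qed

end

section \<open>Escape or stay with high probability\<close>

lemma norm_eq_if_reflection:
  fixes a b e :: "'a::real_inner"
  assumes "norm e = 1" and "a - b \<in> span {e}" and "e \<bullet> a = - (e \<bullet> b)"
  shows "norm b = norm a"
proof -
  obtain c where c: "a - b = c *\<^sub>R e"
    using assms(2) by (auto simp: span_singleton)
  have "e \<bullet> e = 1"
    using assms(1) by (simp add: norm_eq_sqrt_inner)
  then have "c = 2 * (e \<bullet> a)"
    using arg_cong[OF c, of "inner e"] assms(3) by (simp add: inner_diff_right)
  have b: "b = a - c *\<^sub>R e"
    using c by (simp add: algebra_simps)
  have "(norm b)\<^sup>2 = (norm a)\<^sup>2 - 2 * c * (e \<bullet> a) + c * c * (e \<bullet> e)"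
    unfolding b by (simp add: power2_norm_eq_inner inner_diff_left inner_diff_right inner_commute
        algebra_simps)
  with \<open>e \<bullet> e = 1\<close> \<open>c = 2 * (e \<bullet> a)\<close> have "(norm b)\<^sup>2 = (norm a)\<^sup>2"
    by (simp add: algebra_simps)
  then show ?thesis by simp
qed

lemma measurable_noisy_gradient_iterates:
  fixes u w :: "nat \<Rightarrow> 'a \<Rightarrow> 'v::euclidean_space"
  assumes [measurable]: "g \<in> borel_measurable borel" "\<And>k. w k \<in> borel_measurable M"
    and "\<And>\<omega>. u 0 \<omega> = x0"
    and step: "\<And>k \<omega>. u (Suc k) \<omega> = u k \<omega> - \<alpha> *\<^sub>R (g (u k \<omega>) + w k \<omega>)"
  shows "u k \<in> borel_measurable M"
proof (induction k)
  case 0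
  then show ?case by (simp add: \<open>\<And>\<omega>. u 0 \<omega> = x0\<close>)
next
  case (Suc k)
  have "u (Suc k) = (\<lambda>\<omega>. u k \<omega> - \<alpha> *\<^sub>R (g (u k \<omega>) + w k \<omega>))"
    by (simp add: fun_eq_iff step)
  with Suc show ?case by simp
qed

lemma (in prob_space) prob_ge_one_minus_prob:
  assumes "A \<in> events" and "B \<in> events" and "space M - B \<subseteq> A"
  shows "1 - prob B \<le> prob A"
  using prob_compl[OF assms(2)] finite_measure_mono[OF assms(3,1)] by simp

lemma (in prob_space) prob_noisy_gradient_descent_descends_or_stays:
  fixes \<Psi> :: "real^'n^'m \<Rightarrow> real" and g :: "real^'n^'m \<Rightarrow> real^'n^'m"
    and ny nz y z :: "nat \<Rightarrow> 'a \<Rightarrow> real^'n^'m" and e :: "real^'n^'m" and \<rho> :: real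
  assumes grad: "\<And>x. (\<Psi> has_derivative (\<lambda>h. g x \<bullet> h)) (at x)"
    and lip: "\<And>x y. norm (g x - g y) \<le> L * norm (x - y)" and "0 \<le> L"
    and \<alpha>: "0 < \<alpha>" "L * \<alpha> \<le> 1"
    and ny_indep: "indep_vars (\<lambda>_. borel) ny UNIV" and ny_law: "\<And>k. distr M borel (ny k) = gauss \<sigma>"
    and nz_measurable: "\<And>k. nz k \<in> borel_measurable M"
    and "norm e = 1"
    and coupl_span: "\<And>k \<omega>. \<omega> \<in> space M \<Longrightarrow> ny k \<omega> - nz k \<omega> \<in> span {e}"
    and coupl_refl: "\<And>k \<omega>. \<omega> \<in> space M \<Longrightarrow> e \<bullet> ny k \<omega> = - (e \<bullet> nz k \<omega>)"
    and y0: "\<And>\<omega>. y 0 \<omega> = x0" and z0: "\<And>\<omega>. z 0 \<omega> = x0"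
    and y_step: "\<And>k \<omega>. y (Suc k) \<omega> = y k \<omega> - \<alpha> *\<^sub>R (g (y k \<omega>) + ny k \<omega>)"
    and z_step: "\<And>k \<omega>. z (Suc k) \<omega> = z k \<omega> - \<alpha> *\<^sub>R (g (z k \<omega>) + nz k \<omega>)"
    and "0 < \<sigma>" and "0 \<le> \<rho>" and N2: "2 \<le> CARD('m) * CARD('n)"
    and budget: "4 * \<alpha> * r * ls + 4 * \<alpha>\<^sup>2 * r * (2 * real (CARD('m) * CARD('n)) * \<sigma>\<^sup>2 * (r + \<rho>)) \<le> d\<^sup>2"
    and "0 \<le> d"
  shows "1 - exp (- \<rho>) \<le> prob {\<omega> \<in> space M.
           (\<exists>\<tau>\<in>{1..r}. min (\<Psi> (y (t0 + \<tau>) \<omega>) - \<Psi> (y t0 \<omega>))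
                               (\<Psi> (z (t0 + \<tau>) \<omega>) - \<Psi> (z t0 \<omega>)) \<le> - ls)
         \<or> (\<forall>\<tau>\<in>{1..r}. max (norm (y (t0 + \<tau>) \<omega> - y t0 \<omega>))
                               (norm (z (t0 + \<tau>) \<omega> - z t0 \<omega>)) \<le> d)}"
    (is "_ \<le> prob ?T")
proof -
  define B where "B = 2 * real (CARD('m) * CARD('n)) * \<sigma>\<^sup>2 * (r + \<rho>)"
  define W where "W \<omega> = (\<Sum>k\<in>{t0..<t0 + r}. (norm (ny k \<omega>))\<^sup>2)" for \<omega>
  have [measurable]: "ny k \<in> borel_measurable M" "nz k \<in> borel_measurable M" for k
    using ny_indep nz_measurable unfolding indep_vars_def by auto
  have [measurable]: "g \<in> borel_measurable borel"
    using lip \<open>0 \<le> L\<close>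
    by (intro borel_measurable_continuous_onI lipschitz_on_continuous_on[of L] lipschitz_onI)
      (auto simp: dist_norm)
  have [measurable]: "\<Psi> \<in> borel_measurable borel"
    using grad has_derivative_continuous
    by (blast intro: borel_measurable_continuous_onI continuous_at_imp_continuous_on)
  have [measurable]: "y k \<in> borel_measurable M" "z k \<in> borel_measurable M" for k
    by (rule measurable_noisy_gradient_iterates; fact)+
  have "space M - {\<omega>\<in>space M. B \<le> W \<omega>} \<subseteq> ?T"
    apply (intro subsetI CollectI conjI)
    subgoal by simp
    subgoal for \<omega>
      using norm_eq_if_reflection[OF \<open>norm e = 1\<close> coupl_span coupl_refl, of \<omega>]
      by (intro noisy_gradient_descent_pair_descends_or_stays[where y = "\<lambda>k. y k \<omega>"
          and z = "\<lambda>k. z k \<omega>" and wy = "\<lambda>k. ny k \<omega>" and wz = "\<lambda>k. nz k \<omega>",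
          OF grad lip \<alpha> y_step z_step _ _ budget[folded B_def] \<open>0 \<le> d\<close>]) (auto simp: W_def)
    done
  then have "1 - prob {\<omega>\<in>space M. B \<le> W \<omega>} \<le> prob ?T"
    by (intro prob_ge_one_minus_prob) (unfold W_def, measurable)
  moreover have "prob {\<omega>\<in>space M. B \<le> W \<omega>} \<le> exp (- \<rho>)"
    using gauss_energy_tail[OF ny_indep ny_law \<open>0 < \<sigma>\<close> _ N2 \<open>0 \<le> \<rho>\<close>, of "{t0..<t0 + r}"]
    by (simp add: B_def W_def)
  ultimately show ?thesis
    by linarith
qed

lemma step_size_bounds:
  fixes L \<rho> \<alpha> :: real
  assumes "0 \<le> L" and "1 \<le> \<rho>" and \<alpha>_def: "\<alpha> = 1 / (L * \<rho> ^ 7)"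
    and "0 < nat \<lceil>\<rho> / sqrt \<alpha>\<rceil>"
  shows "0 < \<alpha>" and "L * \<alpha> \<le> 1"
proof -
  \<comment> \<open>for \<open>L = 0\<close> the junk value \<open>\<alpha> = 1 / 0 = 0\<close> would give \<open>\<rho> / sqrt \<alpha> = 0\<close>\<close>
  have "L \<noteq> 0"
    using assms(4) by (auto simp: \<alpha>_def)
  with \<open>0 \<le> L\<close> \<open>1 \<le> \<rho>\<close> show "0 < \<alpha>"
    by (simp add: \<alpha>_def)
  have "L * \<alpha> = 1 / \<rho> ^ 7"
    using \<open>L \<noteq> 0\<close> by (simp add: \<alpha>_def)
  also have "\<dots> \<le> 1"
    using \<open>1 \<le> \<rho>\<close> by (simp add: one_le_power)
  finally show "L * \<alpha> \<le> 1" .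
qed

lemma descent_budget:
  fixes \<alpha> \<rho> \<sigma> d ls :: real and r N :: nat
  assumes "0 < \<alpha>" and "0 < r" and "0 \<le> \<rho>"
    and ls_def: "ls = d\<^sup>2 / (4 * \<alpha> * r) - 2 * real N * \<alpha> * \<sigma>\<^sup>2 * (r + sqrt (r * \<rho>) + \<rho>)"
  shows "4 * \<alpha> * r * ls + 4 * \<alpha>\<^sup>2 * r * (2 * real N * \<sigma>\<^sup>2 * (r + \<rho>)) \<le> d\<^sup>2"
proof -
  have "4 * \<alpha> * r * ls = d\<^sup>2 - 8 * real N * \<alpha>\<^sup>2 * \<sigma>\<^sup>2 * r * (r + sqrt (r * \<rho>) + \<rho>)"
    using assms(1,2) by (simp add: ls_def field_simps power2_eq_square)
  moreover have "r * (r + \<rho>) \<le> r * (r + sqrt (r * \<rho>) + \<rho>)"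
    using assms(2,3) by (intro mult_left_mono) auto
  then have "8 * real N * \<alpha>\<^sup>2 * \<sigma>\<^sup>2 * (r * (r + \<rho>))
      \<le> 8 * real N * \<alpha>\<^sup>2 * \<sigma>\<^sup>2 * (r * (r + sqrt (r * \<rho>) + \<rho>))"
    using assms(3) by (intro mult_left_mono) auto
  ultimately show ?thesis
    by (simp add: algebra_simps)
qed

theorem lemma4:
  fixes E :: "'m::finite \<Rightarrow> 'm \<Rightarrow> bool"
    and S :: "real^'m^'m"
    and f :: "'m \<Rightarrow> real^'n::finite \<Rightarrow> real"
    and gf :: "'m \<Rightarrow> real^'n \<Rightarrow> real^'n"
    and Hf :: "'m \<Rightarrow> real^'n \<Rightarrow> real^'n^'n"
    and Lg LH :: "'m \<Rightarrow> real"
    and \<sigma> \<rho> :: real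
    and \<theta>0 x0 :: "real^'n^'m"
    and \<Psi> :: "real^'n^'m \<Rightarrow> real"
    and g\<Psi> :: "real^'n^'m \<Rightarrow> real^'n^'m"
    and H\<Psi> :: "real^'n^'m \<Rightarrow> real^'n^'m"
    and e\<alpha> :: "real^'n^'m" and lam :: real
    and Lg\<Psi> LH\<Psi> \<alpha> d ls :: real and r :: nat
    and M :: "'a measure"
    and ny nz y z :: "nat \<Rightarrow> 'a \<Rightarrow> real^'n^'m"
    and t0 :: nat
  assumes m2: "CARD('m) \<ge> 2"
    and E_sym: "\<And>i j. E i j = E j i" and E_irrefl: "\<And>i. \<not> E i i"
    and S_sym: "transpose S = S"
    and S_psd: "\<And>v. 0 \<le> v \<bullet> (S *v v)"
    and S_sq: "S ** S = graph_laplacian E"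
    and f_smooth: "\<And>i. smooth_fun (f i)"
    and f_grad: "\<And>i x. (f i has_derivative (\<lambda>h. gf i x \<bullet> h)) (at x)"
    and f_hess: "\<And>i x. (gf i has_derivative (\<lambda>h. Hf i x *v h)) (at x)"
    and Lg_pos: "\<And>i. 0 < Lg i" and LH_pos: "\<And>i. 0 < LH i"
    and grad_lip: "\<And>i x x'. norm (gf i x - gf i x') \<le> Lg i * dist x x'"
    and hess_lip: "\<And>i x x'. onorm (\<lambda>h. (Hf i x - Hf i x') *v h) \<le> LH i * dist x x'"
    and \<sigma>_pos: "0 < \<sigma>"
    and \<rho>_ge: "1 \<le> \<rho>"
    and \<Psi>_def: "\<Psi> = (\<lambda>x. \<Sum>i\<in>UNIV. f i ((\<theta>0 + kron_id S x) $ i))"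
    and \<Psi>_grad: "\<And>x. (\<Psi> has_derivative (\<lambda>h. g\<Psi> x \<bullet> h)) (at x)"
    and \<Psi>_hess: "(g\<Psi> has_derivative H\<Psi>) (at x0)"
    and e\<alpha>_unit: "norm e\<alpha> = 1"
    and e\<alpha>_eig: "H\<Psi> e\<alpha> = lam *\<^sub>R e\<alpha>"
    and lam_min: "\<And>\<mu> v. v \<noteq> 0 \<Longrightarrow> H\<Psi> v = \<mu> *\<^sub>R v \<Longrightarrow> lam \<le> \<mu>"
    and Lg\<Psi>_def: "Lg\<Psi> = (onorm (\<lambda>v::real^'m. S *v v))\<^sup>2 * Max (range Lg)"
    and LH\<Psi>_def: "LH\<Psi> = (onorm (\<lambda>v::real^'m. S *v v)) ^ 3 * Max (range LH)"
    and \<alpha>_def: "\<alpha> = 1 / (Lg\<Psi> * \<rho> ^ 7)"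
    and d_def: "d = \<sigma> / (20 * LH\<Psi> * \<rho>\<^sup>2)"
    and r_def: "r = nat \<lceil>\<rho> / sqrt \<alpha>\<rceil>"
    and ls_def: "ls = d\<^sup>2 / (4 * \<alpha> * real r)
        - 2 * real (CARD('m) * CARD('n)) * \<alpha> * \<sigma>\<^sup>2 * (real r + sqrt (real r * \<rho>) + \<rho>)"
    and M_prob: "prob_space M"
    and ny_indep: "prob_space.indep_vars M (\<lambda>_. borel) ny UNIV"
    and nz_indep: "prob_space.indep_vars M (\<lambda>_. borel) nz UNIV"
    and ny_law: "\<And>k. distr M borel (ny k) = gauss \<sigma>"
    and nz_law: "\<And>k. distr M borel (nz k) = gauss \<sigma>"
    and coupl_span: "\<And>k \<omega>. \<omega> \<in> space M \<Longrightarrow> ny k \<omega> - nz k \<omega> \<in> span {e\<alpha>}"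
    and coupl_refl: "\<And>k \<omega>. \<omega> \<in> space M \<Longrightarrow> e\<alpha> \<bullet> ny k \<omega> = - (e\<alpha> \<bullet> nz k \<omega>)"
    and y0: "\<And>\<omega>. y 0 \<omega> = x0" and z0: "\<And>\<omega>. z 0 \<omega> = x0"
    and y_step: "\<And>k \<omega>. y (Suc k) \<omega> = y k \<omega> - \<alpha> *\<^sub>R (g\<Psi> (y k \<omega>) + ny k \<omega>)"
    and z_step: "\<And>k \<omega>. z (Suc k) \<omega> = z k \<omega> - \<alpha> *\<^sub>R (g\<Psi> (z k \<omega>) + nz k \<omega>)"
  shows "measure M {\<omega> \<in> space M.
           (\<exists>\<tau>\<in>{1..r}. min (\<Psi> (y (t0 + \<tau>) \<omega>) - \<Psi> (y t0 \<omega>))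
                               (\<Psi> (z (t0 + \<tau>) \<omega>) - \<Psi> (z t0 \<omega>)) \<le> - ls)
         \<or> (\<forall>\<tau>\<in>{1..r}. max (norm (y (t0 + \<tau>) \<omega> - y t0 \<omega>))
                               (norm (z (t0 + \<tau>) \<omega> - z t0 \<omega>)) \<le> d)}
         \<ge> 1 - 8 * real r * exp (- \<rho>)"
proof -
  interpret prob_space M by (rule M_prob)
  show ?thesis
  proof (cases "r = 0")
    case True
    then show ?thesis by (simp add: prob_space)
  next
    case False
    have "0 < Max (range Lg)" "0 < Max (range LH)"
      using less_le_trans[OF Lg_pos Max_ge[of "range Lg"]] less_le_trans[OF LH_pos Max_ge[of "range LH"]]
      by auto
    then have "0 \<le> Lg\<Psi>" "0 \<le> LH\<Psi>"
      unfolding Lg\<Psi>_def LH\<Psi>_def by (simp_all add: onorm_pos_le)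
    have \<alpha>: "0 < \<alpha>" "Lg\<Psi> * \<alpha> \<le> 1"
      using step_size_bounds[OF \<open>0 \<le> Lg\<Psi>\<close> \<rho>_ge \<alpha>_def] False by (simp_all add: r_def)
    have lip: "norm (g\<Psi> u - g\<Psi> v) \<le> Lg\<Psi> * norm (u - v)" for u v
      unfolding Lg\<Psi>_def
      by (rule lipschitz_gradient_sum_kron_id[OF S_sym f_grad grad_lip less_imp_le[OF Lg_pos]
            \<Psi>_def \<Psi>_grad])
    have nz_measurable: "nz k \<in> borel_measurable M" for k
      using nz_indep unfolding indep_vars_def by auto
    have "2 \<le> CARD('m) * CARD('n)"
      using mult_le_mono[OF m2, of 1 "CARD('n)"] by (simp add: Suc_le_eq)
    have "0 \<le> d"
      using \<open>0 \<le> LH\<Psi>\<close> \<sigma>_pos by (simp add: d_def)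
    have budget: "4 * \<alpha> * r * ls
        + 4 * \<alpha>\<^sup>2 * r * (2 * real (CARD('m) * CARD('n)) * \<sigma>\<^sup>2 * (r + \<rho>)) \<le> d\<^sup>2"
      using \<alpha>(1) False \<rho>_ge by (intro descent_budget ls_def) auto
    have "1 - 8 * real r * exp (- \<rho>) \<le> 1 - exp (- \<rho>)"
      using False by simp
    then show ?thesis
      using prob_noisy_gradient_descent_descends_or_stays[OF \<Psi>_grad lip \<open>0 \<le> Lg\<Psi>\<close> \<alpha>
          ny_indep ny_law nz_measurable e\<alpha>_unit coupl_span coupl_refl y0 z0 y_step z_step \<sigma>_pos
          order_trans[OF zero_le_one \<rho>_ge] \<open>2 \<le> CARD('m) * CARD('n)\<close> budget \<open>0 \<le> d\<close>]
      by (rule order_trans)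
  qed
qed

end
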